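(* $de_1=m(e_2\otimes e_3)$, $de_2=m(e_3\otimes e_1)$, $de_3=m(e_1\otimes e_2)$.
   Context: Let $\mathcal O_3$ be the Cuntz algebra with three generators: the universal C*-algebra generated by $S_1,S_2,S_3$ with $S_i^*S_i=1$ and $\sum_{j=1}^3 S_jS_j^*=1$. Let $\mathcal A$ be the unital $*$-subalgebra of $\mathcal O_3$ generated by $S_1,S_2,S_3$. The $*$-derivations $\partial_1,\partial_2,\partial_3$ of $\mathcal A$ (infinitesimal generators of the action $\alpha_A(S_i)=\sum_ja_{ij}S_j$ of $SO(3)$) are determined by $\partial_1S_1=0,\ \partial_1S_2=-S_3,\ \partial_1S_3=S_2$; $\partial_2S_1=-S_3,\ \partial_2S_2=0,\ \partial_2S_3=S_1$; $\partial_3S_1=S_2,\ \partial_3S_2=-S_1,\ \partial_3S_3=0$. Let $\tau$ be the unique KMS state of $\mathcal O_3$, $\mathcal H=L^2(\mathcal O_3,\tau)\otimes\mathbb C^N$, $\pi(a)=a\otimes I$, $\mathcal D=\sum_i\partial_i\otimes\sigma_i$ with $\sigma_i\in M_N(\mathbb C)$, $\sigma_i^2=I$, $\sigma_i\sigma_j=-\sigma_j\sigma_i$ ($i\ne j$), $\{\sigma_1,\sigma_2,\sigma_3\}$ and $\{I,\sigma_1\sigma_2,\sigma_1\sigma_3,\sigma_2\sigma_3\}$ linearly independent (e.g. Pauli matrices). The Connes calculus is $\Omega^k_{\mathcal D}(\mathcal A)=\Pi(\Omega^k(\mathcal A))/\Pi(\delta J_0^{k-1})$ where $\Omega^\bullet(\mathcal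 A)$ is the universal differential algebra with differential $\delta$, $\Pi(a_0\delta a_1\cdots\delta a_k)=\pi(a_0)[\mathcal D,\pi(a_1)]\cdots[\mathcal D,\pi(a_k)]$, $J_0^k=\ker\Pi\cap\Omega^k(\mathcal A)$; the differential is $d(\text{class of }\Pi(\omega))=\text{class of }\Pi(\delta\omega)$ and the product $m:\Omega^1_{\mathcal D}\otimes_{\mathcal A}\Omega^1_{\mathcal D}\to\Omega^2_{\mathcal D}$ is induced by multiplication of forms. Here $e_i=1\otimes\sigma_i\in\Omega^1_{\mathcal D}(\mathcal A)$ (e.g. $e_1=\Pi(S_2^*\delta S_3)$), and $m(e_i\otimes e_j)$ is the class of $1\otimes\sigma_i\sigma_j$. *)

theory Defs
  imports Complex_Main "Jordan_Normal_Form.Matrix"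
begin

text \<open>Abstract model of the algebraic Cuntz algebra and of the Connes calculus
 of the spectral triple (A, H, D).  'a is an ambient unital ring carrying a
 complex structure (central unital ring embedding emb of the complex numbers)
 and an involution star.  Elements of pi(A) tensor M_N(C), in which
 all operators Pi(omega) live, are represented as N x N matrices over A.\<close>

inductive_set cuntzA :: "('a::ring_1 \<Rightarrow> 'a) \<Rightarrow> (complex \<Rightarrow> 'a) \<Rightarrow> (nat \<Rightarrow> 'a) \<Rightarrow> 'a set"
  for star emb S where
  gen: "i \<in> {1,2,3} \<Longrightarrow> S i \<in> cuntzA star emb S"
| one: "1 \<in> cuntzA star emb S"
| add: "a \<in> cuntzA star emb S \<Longrightarrow> b \<in> cuntzA star emb S \<Longrightarrow> a + b \<in> cuntzA star emb S"
| mult: "a \<in> cuntzA star emb S \<Longrightarrow> b \<in> cuntzA star emb S \<Longrightarrow> a * b \<in> cuntzA star emb S"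
| scal: "a \<in> cuntzA star emb S \<Longrightarrow> emb c * a \<in> cuntzA star emb S"
| star: "a \<in> cuntzA star emb S \<Longrightarrow> star a \<in> cuntzA star emb S"

definition tens :: "(complex \<Rightarrow> 'a::ring_1) \<Rightarrow> 'a \<Rightarrow> complex mat \<Rightarrow> 'a mat" where
  "tens emb a M = map_mat (\<lambda>z. a * emb z) M"

definition dcomm :: "(complex \<Rightarrow> 'a::ring_1) \<Rightarrow> (nat \<Rightarrow> complex mat) \<Rightarrow> (nat \<Rightarrow> 'a \<Rightarrow> 'a) \<Rightarrow> 'a \<Rightarrow> 'a mat" where
  "dcomm emb sig der a =
     tens emb (der 1 a) (sig 1) + tens emb (der 2 a) (sig 2) + tens emb (der 3 a) (sig 3)"

text \<open>Universal k-forms are represented as finite formal sums (lists) of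
 elementary forms a0 delta a1 ... delta ak, encoded as pairs (a0, [a1,...,ak]).\<close>
definition uforms :: "'a set \<Rightarrow> nat \<Rightarrow> ('a \<times> 'a list) list set" where
  "uforms A k = {w. \<forall>(a0, as) \<in> set w. a0 \<in> A \<and> set as \<subseteq> A \<and> length as = k}"

definition Pi_term :: "nat \<Rightarrow> (complex \<Rightarrow> 'a::ring_1) \<Rightarrow> (nat \<Rightarrow> complex mat) \<Rightarrow> (nat \<Rightarrow> 'a \<Rightarrow> 'a)
    \<Rightarrow> 'a \<times> 'a list \<Rightarrow> 'a mat" where
  "Pi_term N emb sig der t =
     foldl (\<lambda>M a. M * dcomm emb sig der a) (tens emb (fst t) (1\<^sub>m N)) (snd t)"

fun Pi_form :: "nat \<Rightarrow> (complex \<Rightarrow> 'a::ring_1) \<Rightarrow> (nat \<Rightarrow> complex mat) \<Rightarrow> (nat \<Rightarrow> 'a \<Rightarrow> 'a)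
    \<Rightarrow> ('a \<times> 'a list) list \<Rightarrow> 'a mat" where
  "Pi_form N emb sig der [] = 0\<^sub>m N N"
| "Pi_form N emb sig der (t # ts) = Pi_term N emb sig der t + Pi_form N emb sig der ts"

definition udelta :: "('a::one \<times> 'a list) list \<Rightarrow> ('a \<times> 'a list) list" where
  "udelta w = map (\<lambda>(a0, as). (1, a0 # as)) w"

definition PiOmega :: "'a::ring_1 set \<Rightarrow> nat \<Rightarrow> (complex \<Rightarrow> 'a) \<Rightarrow> (nat \<Rightarrow> complex mat)
    \<Rightarrow> (nat \<Rightarrow> 'a \<Rightarrow> 'a) \<Rightarrow> nat \<Rightarrow> 'a mat set" where
  "PiOmega A N emb sig der k = Pi_form N emb sig der ` uforms A k"

text \<open>Pi(delta J_0^(k-1)), where J_0^(k-1) = ker Pi in Omega^(k-1)(A); zero for k = 0.\<close>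
fun PiDJ :: "'a::ring_1 set \<Rightarrow> nat \<Rightarrow> (complex \<Rightarrow> 'a) \<Rightarrow> (nat \<Rightarrow> complex mat)
    \<Rightarrow> (nat \<Rightarrow> 'a \<Rightarrow> 'a) \<Rightarrow> nat \<Rightarrow> 'a mat set" where
  "PiDJ A N emb sig der 0 = {0\<^sub>m N N}"
| "PiDJ A N emb sig der (Suc k) =
     {Pi_form N emb sig der (udelta w) | w. w \<in> uforms A k \<and> Pi_form N emb sig der w = 0\<^sub>m N N}"

text \<open>The class in Omega^k_D(A) = Pi(Omega^k)/Pi(delta J_0^(k-1)) of an operator X.\<close>
definition cls :: "'a::ring_1 set \<Rightarrow> nat \<Rightarrow> (complex \<Rightarrow> 'a) \<Rightarrow> (nat \<Rightarrow> complex mat)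
    \<Rightarrow> (nat \<Rightarrow> 'a \<Rightarrow> 'a) \<Rightarrow> nat \<Rightarrow> 'a mat \<Rightarrow> 'a mat set" where
  "cls A N emb sig der k X =
     {Y \<in> PiOmega A N emb sig der k. X - Y \<in> PiDJ A N emb sig der k}"

definition dD :: "'a::ring_1 set \<Rightarrow> nat \<Rightarrow> (complex \<Rightarrow> 'a) \<Rightarrow> (nat \<Rightarrow> complex mat)
    \<Rightarrow> (nat \<Rightarrow> 'a \<Rightarrow> 'a) \<Rightarrow> nat \<Rightarrow> 'a mat set \<Rightarrow> 'a mat set" where
  "dD A N emb sig der k c =
     cls A N emb sig der (Suc k)
       (Pi_form N emb sig der (udelta
          (SOME w. w \<in> uforms A k \<and> cls A N emb sig der k (Pi_form N emb sig der w) = c)))"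

definition mD :: "'a::ring_1 set \<Rightarrow> nat \<Rightarrow> (complex \<Rightarrow> 'a) \<Rightarrow> (nat \<Rightarrow> complex mat)
    \<Rightarrow> (nat \<Rightarrow> 'a \<Rightarrow> 'a) \<Rightarrow> 'a mat set \<Rightarrow> 'a mat set \<Rightarrow> 'a mat set" where
  "mD A N emb sig der c c' =
     cls A N emb sig der 2 (SOME Z. \<exists>X\<in>c. \<exists>Y\<in>c'. Z = X * Y)"

definition eD :: "'a::ring_1 set \<Rightarrow> nat \<Rightarrow> (complex \<Rightarrow> 'a) \<Rightarrow> (nat \<Rightarrow> complex mat)
    \<Rightarrow> (nat \<Rightarrow> 'a \<Rightarrow> 'a) \<Rightarrow> nat \<Rightarrow> 'a mat set" where
  "eD A N emb sig der i = cls A N emb sig der 1 (tens emb 1 (sig i))"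

end

theory Submission
  imports Defs
begin

text \<open>Pi sends a universal 0-form to (sum of its coefficients) tensor 1, so an element of J_0^0
  has coefficient sum 0 and Pi(delta J_0^0) = 0: every class in Omega^1_D is a singleton {Pi w}.
  Hence m just multiplies representatives, and d [Pi w] = [Pi (delta w)] does not depend on w,
  since two choices of w differ by an element of J_0^1, whose image under Pi o delta is exactly
  what Omega^2_D divides out.  What remains is a computation: e_1 = S_2^* [D, S_3] and
  d e_1 = [D, S_2^*] [D, S_3] = sigma_2 sigma_3, by S_i^* S_j = delta_ij and the anticommutation
  of the sigma_i, and cyclically.\<close>

declare One_nat_def [simp del]

lemma uminus_zero_mat [simp]: "- 0\<^sub>m n m = (0\<^sub>m n m :: 'a::group_add mat)"
  by (intro eq_matI) auto

locale dirac_calculus =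
  fixes A :: "'a::ring_1 set" and emb :: "complex \<Rightarrow> 'a"
    and sig :: "nat \<Rightarrow> complex mat" and der :: "nat \<Rightarrow> 'a \<Rightarrow> 'a" and N :: nat
  assumes emb_add: "\<And>z w. emb (z + w) = emb z + emb w"
    and emb_mult: "\<And>z w. emb (z * w) = emb z * emb w"
    and emb_one: "emb 1 = 1"
    and emb_central: "\<And>z x. emb z * x = x * emb z"
    and one_in_A: "1 \<in> A"
    and add_in_A: "\<And>a b. a \<in> A \<Longrightarrow> b \<in> A \<Longrightarrow> a + b \<in> A"
    and scal_in_A: "\<And>z a. a \<in> A \<Longrightarrow> emb z * a \<in> A"
    and der_add: "\<And>i a b. i \<in> {1,2,3} \<Longrightarrow> a \<in> A \<Longrightarrow> b \<in> A \<Longrightarrow> der i (a + b) = der i a + der i b"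
    and der_scal: "\<And>i z a. i \<in> {1,2,3} \<Longrightarrow> a \<in> A \<Longrightarrow> der i (emb z * a) = emb z * der i a"
    and sig_carrier: "\<And>i. i \<in> {1,2,3} \<Longrightarrow> sig i \<in> carrier_mat N N"
begin

abbreviation "T \<equiv> tens emb"
abbreviation "D \<equiv> dcomm emb sig der"
abbreviation "Pt \<equiv> Pi_term N emb sig der"
abbreviation "P \<equiv> Pi_form N emb sig der"
abbreviation "dJ \<equiv> PiDJ A N emb sig der"
abbreviation "cl \<equiv> cls A N emb sig der"

lemma emb_zero [simp]: "emb 0 = 0"
  using emb_add[of 0 0] by simp

lemma emb_uminus: "emb (- z) = - emb z"
  using emb_add[of z "- z"] by (metis add.right_inverse emb_zero minus_unique)

lemma emb_sum: "emb (sum f I) = (\<Sum>i\<in>I. emb (f i))"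
  by (induction I rule: infinite_finite_induct) (auto simp: emb_add)

lemma zero_in_A [simp]: "0 \<in> A"
  using scal_in_A[OF one_in_A, of 0] by simp

lemma uminus_in_A: "a \<in> A \<Longrightarrow> - a \<in> A"
  using scal_in_A[of a "- 1"] by (simp add: emb_uminus emb_one)

lemma der_zero: "i \<in> {1,2,3} \<Longrightarrow> der i 0 = 0"
  using der_add[of i 0 0] by simp

lemma der_uminus: "i \<in> {1,2,3} \<Longrightarrow> a \<in> A \<Longrightarrow> der i (- a) = - der i a"
  using der_scal[of i a "- 1"] by (simp add: emb_uminus emb_one)

lemma sig_carrier' [simp]: "sig 1 \<in> carrier_mat N N" "sig 2 \<in> carrier_mat N N" "sig 3 \<in> carrier_mat N N"
  using sig_carrier by auto

lemma sig_dim [simp]: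
  "dim_row (sig 1) = N" "dim_col (sig 1) = N" "dim_row (sig 2) = N" "dim_col (sig 2) = N"
  "dim_row (sig 3) = N" "dim_col (sig 3) = N"
  using carrier_matD sig_carrier' by blast+

lemma sig_mult_carrier [simp]: "i \<in> {1,2,3} \<Longrightarrow> j \<in> {1,2,3} \<Longrightarrow> sig i * sig j \<in> carrier_mat N N"
  using sig_carrier by (meson mult_carrier_mat)

lemma tens_carrier [simp]: "M \<in> carrier_mat n m \<Longrightarrow> T a M \<in> carrier_mat n m"
  and tens_dim [simp]: "dim_row (T a M) = dim_row M" "dim_col (T a M) = dim_col M"
  and tens_index [simp]: "i < dim_row M \<Longrightarrow> j < dim_col M \<Longrightarrow> T a M $$ (i,j) = a * emb (M $$ (i,j))"
  by (auto simp: tens_def)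

lemma tens_mult:
  assumes "M \<in> carrier_mat n k" "M' \<in> carrier_mat k m"
  shows "T a M * T b M' = T (a * b) (M * M')"
proof (rule eq_matI)
  fix i j assume ij: "i < dim_row (T (a * b) (M * M'))" "j < dim_col (T (a * b) (M * M'))"
  have swap: "a * emb x * (b * emb y) = a * b * emb (x * y)" for x y
  proof -
    have "a * emb x * (b * emb y) = a * (emb x * b) * emb y" by (simp add: mult.assoc)
    also have "\<dots> = a * b * emb (x * y)" by (simp only: emb_central[of x b] emb_mult mult.assoc)
    finally show ?thesis .
  qed
  have "(T a M * T b M') $$ (i,j) = (\<Sum>l\<in>{0..<k}. a * emb (M $$ (i,l)) * (b * emb (M' $$ (l,j))))"
    using assms ij by (auto simp: scalar_prod_def intro!: sum.cong)
  also have "\<dots> = T (a * b) (M * M') $$ (i,j)"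
    using assms ij by (auto simp: swap scalar_prod_def sum_distrib_left emb_sum)
  finally show "(T a M * T b M') $$ (i,j) = T (a * b) (M * M') $$ (i,j)" .
qed (use assms in auto)

lemma tens_uminus: "T (- a) M = - T a M"
  and tens_uminus_mat: "T a (- M) = - T a M"
  by (intro eq_matI; auto simp: emb_uminus)+

lemma tens_zero [simp]: "T 0 M = 0\<^sub>m (dim_row M) (dim_col M)"
  by (intro eq_matI) auto

lemma tens_one_one [simp]: "T 1 (1\<^sub>m n) = 1\<^sub>m n"
  by (intro eq_matI) (auto simp: emb_one)

lemma D_carrier [simp]: "D a \<in> carrier_mat N N"
  and D_dim [simp]: "dim_row (D a) = N" "dim_col (D a) = N"
  by (auto simp: dcomm_def)

lemma D_index: "i < N \<Longrightarrow> j < N \<Longrightarrow> D a $$ (i,j) =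
   der 1 a * emb (sig 1 $$ (i,j)) + der 2 a * emb (sig 2 $$ (i,j)) + der 3 a * emb (sig 3 $$ (i,j))"
  by (simp add: dcomm_def)

lemma D_add: "a \<in> A \<Longrightarrow> b \<in> A \<Longrightarrow> D (a + b) = D a + D b"
  by (intro eq_matI) (auto simp: D_index der_add algebra_simps)

lemma D_uminus: "a \<in> A \<Longrightarrow> D (- a) = - D a"
  by (intro eq_matI) (auto simp: D_index der_uminus)

lemma D_zero: "D 0 = 0\<^sub>m N N"
  by (intro eq_matI) (auto simp: D_index der_zero)

lemma foldl_D_carrier: "M \<in> carrier_mat N N \<Longrightarrow> foldl (\<lambda>M a. M * D a) M as \<in> carrier_mat N N"
  by (induction as arbitrary: M) auto

lemma foldl_D_uminus:
  "M \<in> carrier_mat N N \<Longrightarrow> foldl (\<lambda>M a. M * D a) (- M) as = - foldl (\<lambda>M a. M * D a) M as"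
proof (induction as arbitrary: M)
  case (Cons a as)
  then have "- M * D a = - (M * D a)" by simp
  with Cons show ?case by simp
qed simp

lemma Pi_term_carrier [simp]: "Pt t \<in> carrier_mat N N"
  unfolding Pi_term_def by (rule foldl_D_carrier) simp

lemma Pi_form_carrier [simp]: "P w \<in> carrier_mat N N"
  by (induction w) auto

lemma Pi_term_dim [simp]: "dim_row (Pt t) = N" "dim_col (Pt t) = N"
  and Pi_form_dim [simp]: "dim_row (P w) = N" "dim_col (P w) = N"
  using carrier_matD Pi_term_carrier Pi_form_carrier by blast+

lemma Pi_form_append: "P (w1 @ w2) = P w1 + P w2"
  by (induction w1) auto

lemma uforms_append: "w1 \<in> uforms A k \<Longrightarrow> w2 \<in> uforms A k \<Longrightarrow> w1 @ w2 \<in> uforms A k"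
  by (auto simp: uforms_def)

lemma udelta_append: "udelta (w1 @ w2) = udelta w1 @ udelta w2"
  by (simp add: udelta_def)

definition uform_neg :: "('a \<times> 'a list) list \<Rightarrow> ('a \<times> 'a list) list" where
  "uform_neg w = map (\<lambda>(a, as). (- a, as)) w"

lemma uforms_uform_neg: "w \<in> uforms A k \<Longrightarrow> uform_neg w \<in> uforms A k"
  by (auto simp: uforms_def uform_neg_def uminus_in_A)

lemma Pi_form_uform_neg: "P (uform_neg w) = - P w"
proof (induction w)
  case (Cons t w)
  obtain a as where t: "t = (a, as)" by fastforce
  have "Pt (- a, as) = - Pt (a, as)"
    unfolding Pi_term_def by (simp add: tens_uminus foldl_D_uminus)
  with Cons have "P (uform_neg (t # w)) = - Pt t + - P w" by (simp add: uform_neg_def t)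
  also have "\<dots> = - (Pt t + P w)" by (intro eq_matI) auto
  finally show ?case by simp
qed (auto simp: uform_neg_def)

lemma Pi_form_udelta_uform_neg: "w \<in> uforms A k \<Longrightarrow> P (udelta (uform_neg w)) = - P (udelta w)"
proof (induction w)
  case (Cons t w)
  obtain a as where t: "t = (a, as)" by fastforce
  from Cons.prems t have a: "a \<in> A" and w: "w \<in> uforms A k" by (auto simp: uforms_def)
  have "Pt (1, - a # as) = - Pt (1, a # as)"
    unfolding Pi_term_def using a by (simp add: D_uminus foldl_D_uminus)
  with Cons.IH[OF w] have "P (udelta (uform_neg (t # w))) = - Pt (1, a # as) + - P (udelta w)"
    by (simp add: uform_neg_def udelta_def t)
  also have "\<dots> = - (Pt (1, a # as) + P (udelta w))" by (intro eq_matI) auto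
  finally show ?case by (simp add: udelta_def t)
qed (auto simp: uform_neg_def udelta_def)

lemma Pi_form_degree_zero:
  assumes "w \<in> uforms A 0"
  shows "sum_list (map fst w) \<in> A \<and> P w = T (sum_list (map fst w)) (1\<^sub>m N)
    \<and> P (udelta w) = D (sum_list (map fst w))"
  using assms
proof (induction w)
  case (Cons t w)
  obtain a as where t: "t = (a, as)" by fastforce
  from Cons.prems t have a: "a \<in> A" and as: "as = []" and w: "w \<in> uforms A 0"
    by (auto simp: uforms_def)
  have "T a (1\<^sub>m N) + T (sum_list (map fst w)) (1\<^sub>m N) = T (a + sum_list (map fst w)) (1\<^sub>m N)"
    by (intro eq_matI) (auto simp: algebra_simps)
  with Cons.IH[OF w] a show ?case
    by (auto simp: t as udelta_def Pi_term_def D_add add_in_A)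
qed (auto simp: udelta_def D_zero)

lemma zero_in_PiDJ: "0\<^sub>m N N \<in> dJ k"
proof (cases k)
  case (Suc k')
  have "[] \<in> uforms A k'" by (simp add: uforms_def)
  then have "P (udelta []) \<in> dJ (Suc k')" by force
  with Suc show ?thesis by (simp add: udelta_def)
qed simp

lemma PiDJ_Suc_add: "X \<in> dJ (Suc k) \<Longrightarrow> Y \<in> dJ (Suc k) \<Longrightarrow> X + Y \<in> dJ (Suc k)"
proof -
  assume "X \<in> dJ (Suc k)" "Y \<in> dJ (Suc k)"
  then obtain w v where "w \<in> uforms A k" "P w = 0\<^sub>m N N" "X = P (udelta w)"
     "v \<in> uforms A k" "P v = 0\<^sub>m N N" "Y = P (udelta v)" by auto
  then have "w @ v \<in> uforms A k" "P (w @ v) = 0\<^sub>m N N" "X + Y = P (udelta (w @ v))"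
    by (auto simp: uforms_append Pi_form_append udelta_append)
  then show ?thesis by auto
qed

lemma PiDJ_Suc_uminus: "X \<in> dJ (Suc k) \<Longrightarrow> - X \<in> dJ (Suc k)"
proof -
  assume "X \<in> dJ (Suc k)"
  then obtain w where "w \<in> uforms A k" "P w = 0\<^sub>m N N" "X = P (udelta w)" by auto
  then have "uform_neg w \<in> uforms A k" "P (uform_neg w) = 0\<^sub>m N N"
    "- X = P (udelta (uform_neg w))"
    by (auto simp: uforms_uform_neg Pi_form_uform_neg Pi_form_udelta_uform_neg)
  then show ?thesis by auto
qed

lemma cls_Suc_eqI:
  assumes "X \<in> carrier_mat N N" "Y \<in> carrier_mat N N" "X - Y \<in> dJ (Suc k)"
  shows "cl (Suc k) X = cl (Suc k) Y"
proof -
  have "X - Z \<in> dJ (Suc k) \<longleftrightarrow> Y - Z \<in> dJ (Suc k)" if Z: "Z \<in> carrier_mat N N" for Z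
  proof
    assume "X - Z \<in> dJ (Suc k)"
    from PiDJ_Suc_add[OF this PiDJ_Suc_uminus[OF assms(3)]] show "Y - Z \<in> dJ (Suc k)"
      by (rule back_subst) (use assms Z in \<open>intro eq_matI, auto\<close>)
  next
    assume "Y - Z \<in> dJ (Suc k)"
    from PiDJ_Suc_add[OF assms(3) this] show "X - Z \<in> dJ (Suc k)"
      by (rule back_subst) (use assms Z in \<open>intro eq_matI, auto\<close>)
  qed
  then show ?thesis unfolding cls_def PiOmega_def by (auto simp del: PiDJ.simps)
qed

lemma PiDJ_one: "dJ 1 = {0\<^sub>m N N}"
proof
  show "dJ 1 \<subseteq> {0\<^sub>m N N}"
  proof
    fix X assume "X \<in> dJ 1"
    then obtain w where w: "w \<in> uforms A 0" "P w = 0\<^sub>m N N" and X: "X = P (udelta w)"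
      by (auto simp: One_nat_def)
    define s where "s = sum_list (map fst w)"
    from Pi_form_degree_zero[OF w(1)] w(2) have s: "T s (1\<^sub>m N) = 0\<^sub>m N N" and "X = D s"
      by (auto simp: s_def X)
    show "X \<in> {0\<^sub>m N N}"
    proof (cases "N = 0")
      case True
      have "X \<in> carrier_mat N N" by (simp add: X)
      with True show ?thesis by (auto intro!: eq_matI)
    next
      case False
      with s have "T s (1\<^sub>m N) $$ (0,0) = 0\<^sub>m N N $$ (0,0)" by simp
      with False have "s = 0" by (simp add: emb_one)
      with \<open>X = D s\<close> show ?thesis by (simp add: D_zero)
    qed
  qed
qed (use zero_in_PiDJ in blast)

lemma cls_one_Pi_form: "w \<in> uforms A 1 \<Longrightarrow> cl 1 (P w) = {P w}"
proof -
  assume w: "w \<in> uforms A 1"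
  have "P w - Z = 0\<^sub>m N N \<longleftrightarrow> Z = P w" if "Z \<in> carrier_mat N N" for Z
  proof
    assume zero: "P w - Z = 0\<^sub>m N N"
    show "Z = P w"
    proof (rule eq_matI)
      fix i j assume "i < dim_row (P w)" "j < dim_col (P w)"
      with that have "(P w - Z) $$ (i,j) = P w $$ (i,j) - Z $$ (i,j)" by auto
      with zero \<open>i < dim_row (P w)\<close> \<open>j < dim_col (P w)\<close>
      show "Z $$ (i,j) = P w $$ (i,j)" by simp
    qed (use that in auto)
  qed (auto intro: eq_matI)
  with w show ?thesis
    unfolding cls_def PiOmega_def PiDJ_one by auto
qed

lemma dD_cls_one:
  assumes w0: "w0 \<in> uforms A 1"
  shows "dD A N emb sig der 1 (cl 1 (P w0)) = cl 2 (P (udelta w0))"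
proof -
  define w where "w = (SOME w. w \<in> uforms A 1 \<and> cl 1 (P w) = cl 1 (P w0))"
  have "w \<in> uforms A 1 \<and> cl 1 (P w) = cl 1 (P w0)"
    unfolding w_def by (rule someI[of _ w0]) (simp add: w0)
  then have w: "w \<in> uforms A 1" and "cl 1 (P w) = cl 1 (P w0)" by simp_all
  then have eq: "P w = P w0" using cls_one_Pi_form[OF w] cls_one_Pi_form[OF w0] by simp
  define u where "u = w @ uform_neg w0"
  have u: "u \<in> uforms A 1" unfolding u_def by (intro uforms_append uforms_uform_neg w w0)
  have "P u = P w + - P w0" unfolding u_def by (simp add: Pi_form_append Pi_form_uform_neg)
  also have "\<dots> = 0\<^sub>m N N" unfolding eq by (intro eq_matI) auto
  finally have "P (udelta u) \<in> dJ (Suc 1)" using u by (simp only: PiDJ.simps) blast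
  moreover have "P (udelta u) = P (udelta w) - P (udelta w0)"
    unfolding u_def udelta_append Pi_form_append Pi_form_udelta_uform_neg[OF w0]
    by (intro eq_matI) auto
  ultimately have "cl (Suc 1) (P (udelta w)) = cl (Suc 1) (P (udelta w0))"
    by (intro cls_Suc_eqI) simp_all
  then show ?thesis unfolding dD_def Suc_1 w_def[symmetric] .
qed

lemma mD_cls_one:
  assumes "w1 \<in> uforms A 1" "w2 \<in> uforms A 1"
  shows "mD A N emb sig der (cl 1 (P w1)) (cl 1 (P w2)) = cl 2 (P w1 * P w2)"
  unfolding mD_def cls_one_Pi_form[OF assms(1)] cls_one_Pi_form[OF assms(2)] by simp

lemma dD_cls_one_eq_mD:
  assumes "w \<in> uforms A 1" "w1 \<in> uforms A 1" "w2 \<in> uforms A 1"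
    and "P (udelta w) = P w1 * P w2"
  shows "dD A N emb sig der 1 (cl 1 (P w)) = mD A N emb sig der (cl 1 (P w1)) (cl 1 (P w2))"
  using assms by (simp add: dD_cls_one mD_cls_one)

end

locale cuntz_dirac = dirac_calculus "cuntzA star emb S" emb sig der N
  for star :: "'a::ring_1 \<Rightarrow> 'a" and S emb sig der N +
  assumes star_add: "\<And>x y. star (x + y) = star x + star y"
    and cuntz_iso: "\<And>i j. i \<in> {1,2,3} \<Longrightarrow> j \<in> {1,2,3} \<Longrightarrow>
                     star (S i) * S j = (if i = j then 1 else 0)"
    and der_star: "\<And>i a. i \<in> {1,2,3} \<Longrightarrow> a \<in> cuntzA star emb S \<Longrightarrow> der i (star a) = star (der i a)"
    and der1: "der 1 (S 1) = 0" "der 1 (S 2) = - S 3" "der 1 (S 3) = S 2"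
    and der2: "der 2 (S 1) = - S 3" "der 2 (S 2) = 0" "der 2 (S 3) = S 1"
    and der3: "der 3 (S 1) = S 2" "der 3 (S 2) = - S 1" "der 3 (S 3) = 0"
    and sig_anti: "\<And>i j. i \<in> {1,2,3} \<Longrightarrow> j \<in> {1,2,3} \<Longrightarrow> i \<noteq> j \<Longrightarrow>
                     sig i * sig j = - (sig j * sig i)"
begin

abbreviation "e \<equiv> eD (cuntzA star emb S) N emb sig der"

lemma star_zero [simp]: "star 0 = 0"
  using star_add[of 0 0] by simp

lemma star_uminus: "star (- x) = - star x"
  using star_add[of x "- x"] by (metis add.right_inverse minus_unique star_zero)

lemma generators_in_A [simp]:
  "S 1 \<in> cuntzA star emb S" "S 2 \<in> cuntzA star emb S" "S 3 \<in> cuntzA star emb S"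
  "star (S 1) \<in> cuntzA star emb S" "star (S 2) \<in> cuntzA star emb S" "star (S 3) \<in> cuntzA star emb S"
  by (auto intro: cuntzA.star cuntzA.gen)

lemma cuntz_iso' [simp]:
  "star (S 1) * S 1 = 1" "star (S 1) * S 2 = 0" "star (S 1) * S 3 = 0"
  "star (S 2) * S 1 = 0" "star (S 2) * S 2 = 1" "star (S 2) * S 3 = 0"
  "star (S 3) * S 1 = 0" "star (S 3) * S 2 = 0" "star (S 3) * S 3 = 1"
  by (simp_all add: cuntz_iso)

lemma D_S1: "D (S 1) = T (- S 3) (sig 2) + T (S 2) (sig 3)"
  and D_S3: "D (S 3) = T (S 2) (sig 1) + T (S 1) (sig 2)"
  and D_star_S1: "D (star (S 1)) = T (- star (S 3)) (sig 2) + T (star (S 2)) (sig 3)"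
  and D_star_S2: "D (star (S 2)) = T (- star (S 3)) (sig 1) + T (- star (S 1)) (sig 3)"
  by (intro eq_matI; auto simp: D_index der1 der2 der3 der_star star_uminus)+

lemmas square_mat_simps = tens_mult[where n = N and k = N and m = N]
  mult_add_distrib_mat[where nr = N and n = N and nc = N]
  add_mult_distrib_mat[where nr = N and n = N and nc = N]

lemma e_reps:
  "P [(star (S 2), [S 3])] = T 1 (sig 1)"
  "P [(star (S 1), [S 3])] = T 1 (sig 2)"
  "P [(star (S 2), [S 1])] = T 1 (sig 3)"
  by (simp_all add: Pi_term_def D_S1 D_S3 square_mat_simps)

lemma d_e_reps:
  "P (udelta [(star (S 2), [S 3])]) = T 1 (sig 2) * T 1 (sig 3)"
  "P (udelta [(star (S 1), [S 3])]) = T 1 (sig 3) * T 1 (sig 1)"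
  "P (udelta [(star (S 2), [S 1])]) = T 1 (sig 1) * T 1 (sig 2)"
proof -
  have "sig 2 * sig 3 = - (sig 3 * sig 2)" by (rule sig_anti) auto
  then show "P (udelta [(star (S 2), [S 3])]) = T 1 (sig 2) * T 1 (sig 3)"
    by (simp add: udelta_def Pi_term_def D_star_S2 D_S3 square_mat_simps tens_uminus tens_uminus_mat)
qed (simp_all add: udelta_def Pi_term_def D_star_S1 D_star_S2 D_S1 D_S3 square_mat_simps)

lemma reps_uforms:
  "[(star (S 2), [S 3])] \<in> uforms (cuntzA star emb S) 1"
  "[(star (S 1), [S 3])] \<in> uforms (cuntzA star emb S) 1"
  "[(star (S 2), [S 1])] \<in> uforms (cuntzA star emb S) 1"
  by (simp_all add: uforms_def)

lemma e_cls:
  "e 1 = cl 1 (P [(star (S 2), [S 3])])"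
  "e 2 = cl 1 (P [(star (S 1), [S 3])])"
  "e 3 = cl 1 (P [(star (S 2), [S 1])])"
  unfolding eD_def e_reps by simp_all

lemma d_e1: "dD (cuntzA star emb S) N emb sig der 1 (e 1) = mD (cuntzA star emb S) N emb sig der (e 2) (e 3)"
  unfolding e_cls by (rule dD_cls_one_eq_mD[OF reps_uforms(1,2,3)]) (simp only: e_reps d_e_reps)

lemma d_e2: "dD (cuntzA star emb S) N emb sig der 1 (e 2) = mD (cuntzA star emb S) N emb sig der (e 3) (e 1)"
  unfolding e_cls by (rule dD_cls_one_eq_mD[OF reps_uforms(2,3,1)]) (simp only: e_reps d_e_reps)

lemma d_e3: "dD (cuntzA star emb S) N emb sig der 1 (e 3) = mD (cuntzA star emb S) N emb sig der (e 1) (e 2)"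
  unfolding e_cls by (rule dD_cls_one_eq_mD[OF reps_uforms(3,1,2)]) (simp only: e_reps d_e_reps)

end

theorem mainTheorem5:
  fixes star :: "'a::ring_1 \<Rightarrow> 'a" and emb :: "complex \<Rightarrow> 'a"
    and S :: "nat \<Rightarrow> 'a" and der :: "nat \<Rightarrow> 'a \<Rightarrow> 'a"
    and sig :: "nat \<Rightarrow> complex mat" and N :: nat
  defines "A \<equiv> cuntzA star emb S"
  assumes emb_add: "\<And>z w. emb (z + w) = emb z + emb w"
    and emb_mult: "\<And>z w. emb (z * w) = emb z * emb w"
    and emb_one: "emb 1 = 1"
    and emb_central: "\<And>z x. emb z * x = x * emb z"
    and star_add: "\<And>x y. star (x + y) = star x + star y"
    and star_mult: "\<And>x y. star (x * y) = star y * star x"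
    and star_star: "\<And>x. star (star x) = x"
    and star_emb: "\<And>z. star (emb z) = emb (cnj z)"
    and cuntz_iso: "\<And>i j. i \<in> {1,2,3} \<Longrightarrow> j \<in> {1,2,3} \<Longrightarrow>
                     star (S i) * S j = (if i = j then 1 else 0)"
    and cuntz_sum: "S 1 * star (S 1) + S 2 * star (S 2) + S 3 * star (S 3) = 1"
    and der_add: "\<And>i a b. i \<in> {1,2,3} \<Longrightarrow> a \<in> A \<Longrightarrow> b \<in> A \<Longrightarrow> der i (a + b) = der i a + der i b"
    and der_scal: "\<And>i z a. i \<in> {1,2,3} \<Longrightarrow> a \<in> A \<Longrightarrow> der i (emb z * a) = emb z * der i a"
    and der_leibniz: "\<And>i a b. i \<in> {1,2,3} \<Longrightarrow> a \<in> A \<Longrightarrow> b \<in> A \<Longrightarrow>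
                        der i (a * b) = der i a * b + a * der i b"
    and der_star: "\<And>i a. i \<in> {1,2,3} \<Longrightarrow> a \<in> A \<Longrightarrow> der i (star a) = star (der i a)"
    and der1: "der 1 (S 1) = 0" "der 1 (S 2) = - S 3" "der 1 (S 3) = S 2"
    and der2: "der 2 (S 1) = - S 3" "der 2 (S 2) = 0" "der 2 (S 3) = S 1"
    and der3: "der 3 (S 1) = S 2" "der 3 (S 2) = - S 1" "der 3 (S 3) = 0"
    and sig_carrier: "\<And>i. i \<in> {1,2,3} \<Longrightarrow> sig i \<in> carrier_mat N N"
    and sig_sq: "\<And>i. i \<in> {1,2,3} \<Longrightarrow> sig i * sig i = 1\<^sub>m N"
    and sig_anti: "\<And>i j. i \<in> {1,2,3} \<Longrightarrow> j \<in> {1,2,3} \<Longrightarrow> i \<noteq> j \<Longrightarrow>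
                     sig i * sig j = - (sig j * sig i)"
    and sig_indep1: "\<And>c1 c2 c3. c1 \<cdot>\<^sub>m sig 1 + c2 \<cdot>\<^sub>m sig 2 + c3 \<cdot>\<^sub>m sig 3 = 0\<^sub>m N N \<Longrightarrow>
                     c1 = 0 \<and> c2 = 0 \<and> c3 = 0"
    and sig_indep2: "\<And>c0 c1 c2 c3. c0 \<cdot>\<^sub>m 1\<^sub>m N + c1 \<cdot>\<^sub>m (sig 1 * sig 2)
                        + c2 \<cdot>\<^sub>m (sig 1 * sig 3) + c3 \<cdot>\<^sub>m (sig 2 * sig 3) = 0\<^sub>m N N \<Longrightarrow>
                     c0 = 0 \<and> c1 = 0 \<and> c2 = 0 \<and> c3 = 0"
  shows "dD A N emb sig der 1 (eD A N emb sig der 1) = mD A N emb sig der (eD A N emb sig der 2) (eD A N emb sig der 3) \<and>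
         dD A N emb sig der 1 (eD A N emb sig der 2) = mD A N emb sig der (eD A N emb sig der 3) (eD A N emb sig der 1) \<and>
         dD A N emb sig der 1 (eD A N emb sig der 3) = mD A N emb sig der (eD A N emb sig der 1) (eD A N emb sig der 2)"
proof -
  interpret cuntz_dirac star S emb sig der N
    by (unfold_locales; (rule emb_add emb_mult emb_one emb_central star_add cuntz_iso
        der1 der2 der3 sig_carrier sig_anti cuntzA.one cuntzA.add cuntzA.scal
        der_add[unfolded A_def] der_scal[unfolded A_def] der_star[unfolded A_def] | assumption)+)
  show ?thesis
    unfolding A_def using d_e1 d_e2 d_e3 by blast
qed

end
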